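(* Let $q$ be a prime power and let $l_1,l_2$ be distinct odd primes, each coprime to $q$. If every irreducible monic factor of $x^{l_1}-1$ and of $x^{l_2}-1$ in $\mathbb{F}_{q^2}[x]$ is SCRIM and $\gcd(\mathrm{ord}_{l_1}(q^2),\mathrm{ord}_{l_2}(q^2))=1$, then $|\Omega_{q^2,l_1l_2}|=|\Omega_{q^2,l_1}|\,|\Omega_{q^2,l_2}|$.
   Context: $\mathbb{F}_{q^2}$ is the finite field with $q^2$ elements. For $\alpha\in\mathbb{F}_{q^2}$ put $\bar\alpha=\alpha^q$, and for $f(x)=\sum_i f_ix^i$ put $\overline{f(x)}=\sum_i \bar f_i x^i$. For $f(x)$ with $f(0)\neq 0$, $f^*(x)=x^{\deg f}f(0)^{-1}f(1/x)$ and $f^\dagger(x)=\overline{f^*(x)}$. A polynomial is SCRIM if it is monic, irreducible over $\mathbb{F}_{q^2}$, has nonzero constant term, and satisfies $f=f^\dagger$. $\Omega_{q^2,n}$ denotes the set of SCRIM polynomials in $\mathbb{F}_{q^2}[x]$ dividing $x^n-1$. $\mathrm{ord}_l(a)$ is the multiplicative order of $a$ modulo $l$. *)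

theory Defs
  imports "HOL-Computational_Algebra.Computational_Algebra" "HOL-Number_Theory.Pocklington"
begin

definition conj_poly :: "nat \<Rightarrow> 'a::field poly \<Rightarrow> 'a poly" where
  "conj_poly q f = map_poly (\<lambda>a. a ^ q) f"

text \<open>f^*(x) = x^(deg f) f(0)^(-1) f(1/x); reflect_poly f = x^(deg f) f(1/x).\<close>
definition recip_poly :: "'a::field poly \<Rightarrow> 'a poly" where
  "recip_poly f = Polynomial.smult (inverse (Polynomial.coeff f 0)) (reflect_poly f)"

definition dagger_poly :: "nat \<Rightarrow> 'a::field poly \<Rightarrow> 'a poly" where
  "dagger_poly q f = conj_poly q (recip_poly f)"

definition SCRIM :: "nat \<Rightarrow> 'a::field poly \<Rightarrow> bool" where
  "SCRIM q f \<longleftrightarrow> lead_coeff f = 1 \<and> irreducible f \<and> Polynomial.coeff f 0 \<noteq> 0 \<and> f = dagger_poly q f"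

definition Omega :: "nat \<Rightarrow> nat \<Rightarrow> 'a::field poly set" where
  "Omega q n = {f. SCRIM q f \<and> f dvd ([:0, 1:] ^ n - 1)}"

end

(*
  Work in the algebraic closure of F = GF(q^2). The root set of a monic irreducible factor of
  x^m - 1 over F is an orbit of the Frobenius z \<mapsto> z^(q^2) on the m-th roots of unity, and
  this gives a bijection between such factors and such orbits. Since z \<mapsto> z^(-q) applied
  twice is the Frobenius, a factor f with root z equals its conjugate reciprocal f^\<dagger>
  exactly when z^(-q) is again a root of f, i.e. lies in the orbit of z.

  For coprime l1, l2 the map z \<mapsto> (z^l2, z^l1) identifies the (l1 l2)-th roots of unity with
  pairs of an l1-th and an l2-th root of unity. When the orders of q^2 modulo l1 and l2 are
  coprime, the Chinese remainder theorem applied to the exponents q^(2j) shows that orbits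
  correspond exactly to pairs of orbits. Hence the orbit condition, and with it the SCRIM
  property of all factors, passes from l1 and l2 to l1 l2, and the numbers of orbits multiply.
*)

theory Submission
  imports Defs "HOL-Algebra.Algebraic_Closure_Type" "HOL-Library.Cardinality"
begin

hide_const (open) Divisibility.irreducible Divisibility.prime Polynomials.degree
  Polynomials.lead_coeff up_ring.coeff UnivPoly.monom Module.smult

section \<open>Roots of unity and orbits of power maps\<close>

definition unity_roots :: "nat \<Rightarrow> 'b::monoid_mult set" where
  "unity_roots m = {y. y ^ m = 1}"

definition power_orbit :: "nat \<Rightarrow> 'b::monoid_mult \<Rightarrow> 'b set" where
  "power_orbit Q z = range (\<lambda>j. z ^ (Q ^ j))"

lemma self_mem_power_orbit: "z \<in> power_orbit Q z"
  unfolding power_orbit_def by (metis power_0 power_one_right rangeI)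

lemma power_mem_power_orbit:
  assumes "y \<in> power_orbit Q z"
  shows "y ^ (Q ^ j) \<in> power_orbit Q z"
proof -
  obtain i where "y = z ^ (Q ^ i)"
    using assms unfolding power_orbit_def by blast
  then have "y ^ (Q ^ j) = z ^ (Q ^ (i + j))"
    by (simp add: power_add power_mult)
  then show ?thesis
    unfolding power_orbit_def by blast
qed

lemma power_orbit_subset: "y \<in> power_orbit Q z \<Longrightarrow> power_orbit Q y \<subseteq> power_orbit Q z"
  unfolding power_orbit_def[of Q y] using power_mem_power_orbit by blast

lemma image_power_power_orbit: "(\<lambda>y. y ^ a) ` power_orbit Q z = power_orbit Q (z ^ a)"
proof -
  have "(z ^ (Q ^ j)) ^ a = (z ^ a) ^ (Q ^ j)" for j
    by (simp add: mult.commute flip: power_mult)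
  then show ?thesis
    unfolding power_orbit_def image_image by simp
qed

lemma power_eq_power_if_cong:
  fixes z :: "'b::monoid_mult"
  assumes "z ^ m = 1" "[a = b] (mod m)"
  shows "z ^ a = z ^ b"
proof -
  have "z ^ c = z ^ (c mod m)" for c
  proof -
    have "c = m * (c div m) + c mod m"
      by simp
    then have "z ^ c = (z ^ m) ^ (c div m) * z ^ (c mod m)"
      by (metis power_add power_mult)
    then show ?thesis
      using assms(1) by simp
  qed
  then show ?thesis
    using assms(2) unfolding cong_def by metis
qed

lemma power_power_eq_if_cong_ord:
  fixes z :: "'b::monoid_mult"
  assumes "z ^ m = 1" "coprime m Q" "[i = i'] (mod ord m Q)"
  shows "z ^ (Q ^ i) = z ^ (Q ^ i')"
  using assms order_divides_expdiff power_eq_power_if_cong by blast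

lemma power_orbit_eq_if_mem:
  fixes z :: "'b::monoid_mult"
  assumes "z ^ m = 1" "coprime m Q" "y \<in> power_orbit Q z"
  shows "power_orbit Q y = power_orbit Q z"
proof
  obtain t where y: "y = z ^ (Q ^ t)"
    using assms(3) unfolding power_orbit_def by blast
  obtain n where n: "ord m Q = Suc n"
    using assms(2) gr0_implies_Suc ord_gt_0_iff by blast
  have "y ^ (Q ^ (n * t)) = z ^ (Q ^ (ord m Q * t))"
    unfolding y n by (simp add: power_add flip: power_mult)
  also have "\<dots> = z ^ (Q ^ 0)"
    using assms(1,2) by (intro power_power_eq_if_cong_ord) (auto simp: cong_def)
  finally have "z \<in> power_orbit Q y"
    unfolding power_orbit_def by (metis power_0 power_one_right rangeI)
  then show "power_orbit Q z \<subseteq> power_orbit Q y"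
    by (rule power_orbit_subset)
qed (rule power_orbit_subset[OF assms(3)])

lemma unity_roots_mult_recombine:
  fixes b c :: "'b::comm_monoid_mult"
  assumes u: "[l2 * u = 1] (mod l1)" and v: "[l1 * v = 1] (mod l2)"
    and "b \<in> unity_roots l1" "c \<in> unity_roots l2"
  shows "(b ^ u * c ^ v) ^ l2 = b" "(b ^ u * c ^ v) ^ l1 = c"
proof -
  have b: "b ^ l1 = 1" and c: "c ^ l2 = 1"
    using assms(3,4) by (auto simp: unity_roots_def)
  have "(b ^ u * c ^ v) ^ l2 = b ^ (l2 * u) * (c ^ l2) ^ v"
    by (simp add: power_mult_distrib ac_simps flip: power_mult)
  then show "(b ^ u * c ^ v) ^ l2 = b"
    using power_eq_power_if_cong[OF b u] c by simp
  have "(b ^ u * c ^ v) ^ l1 = (b ^ l1) ^ u * c ^ (l1 * v)"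
    by (simp add: power_mult_distrib ac_simps flip: power_mult)
  then show "(b ^ u * c ^ v) ^ l1 = c"
    using power_eq_power_if_cong[OF c v] b by simp
qed

lemma unity_roots_mult_decompose:
  fixes z :: "'b::comm_monoid_mult"
  assumes "coprime l1 l2" and u: "[l2 * u = 1] (mod l1)" and v: "[l1 * v = 1] (mod l2)"
    and "z \<in> unity_roots (l1 * l2)"
  shows "(z ^ l2) ^ u * (z ^ l1) ^ v = z"
proof -
  have "[l2 * u + l1 * v = 1 + 0] (mod l1)"
    by (intro cong_add u) (simp add: cong_mult_self_left)
  moreover have "[l2 * u + l1 * v = 0 + 1] (mod l2)"
    by (intro cong_add v) (simp add: cong_mult_self_left)
  ultimately have uv: "[l2 * u + l1 * v = 1] (mod l1 * l2)"
    using coprime_cong_mult_nat[OF _ _ assms(1)] by simp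
  have "(z ^ l2) ^ u * (z ^ l1) ^ v = z ^ (l2 * u + l1 * v)"
    by (simp add: power_add power_mult)
  also have "\<dots> = z ^ 1"
    using power_eq_power_if_cong[OF _ uv] assms(4) by (simp add: unity_roots_def)
  finally show ?thesis
    by simp
qed

lemma bij_betw_unity_roots_mult:
  assumes "coprime l1 l2"
  shows "bij_betw (\<lambda>z::'b::comm_monoid_mult. (z ^ l2, z ^ l1))
           (unity_roots (l1 * l2)) (unity_roots l1 \<times> unity_roots l2)"
proof -
  obtain u where u: "[l2 * u = 1] (mod l1)"
    using cong_solve_coprime_nat[of l2 l1] assms by (auto simp: coprime_commute)
  obtain v where v: "[l1 * v = 1] (mod l2)"
    using cong_solve_coprime_nat[of l1 l2] assms by auto
  define g where "g = (\<lambda>(b::'b, c). b ^ u * c ^ v)"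
  have left: "g (z ^ l2, z ^ l1) = z" if "z \<in> unity_roots (l1 * l2)" for z
    using unity_roots_mult_decompose[OF assms u v that] by (simp add: g_def)
  have right: "g (b, c) ^ l2 = b \<and> g (b, c) ^ l1 = c"
    if "b \<in> unity_roots l1" "c \<in> unity_roots l2" for b c
    using unity_roots_mult_recombine[OF u v that] by (simp add: g_def)
  show ?thesis
  proof (rule bij_betw_byWitness[where f' = g])
    show "\<forall>z \<in> unity_roots (l1 * l2). g (z ^ l2, z ^ l1) = z"
      using left by blast
    show "\<forall>bc \<in> unity_roots l1 \<times> unity_roots l2. (g bc ^ l2, g bc ^ l1) = bc"
      using right by fastforce
    show "(\<lambda>z. (z ^ l2, z ^ l1)) ` unity_roots (l1 * l2) \<subseteq> unity_roots l1 \<times> unity_roots l2"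
      by (auto simp: unity_roots_def ac_simps simp flip: power_mult)
    have "g (b, c) ^ (l1 * l2) = 1" if "b \<in> unity_roots l1" "c \<in> unity_roots l2" for b c
      using right[OF that] that by (simp add: unity_roots_def power_mult)
    then show "g ` (unity_roots l1 \<times> unity_roots l2) \<subseteq> unity_roots (l1 * l2)"
      by (auto simp: unity_roots_def)
  qed
qed

locale coprime_orders =
  fixes Q l1 l2 :: nat
  assumes coprime_moduli: "coprime l1 l2"
    and coprime_base1: "coprime l1 Q" and coprime_base2: "coprime l2 Q"
    and coprime_ord: "coprime (ord l1 Q) (ord l2 Q)"
begin

lemma power_mem_unity_roots:
  assumes "(z::'b::comm_monoid_mult) \<in> unity_roots (l1 * l2)"
  shows "z ^ l2 \<in> unity_roots l1" "z ^ l1 \<in> unity_roots l2"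
  using bij_betwE[OF bij_betw_unity_roots_mult[OF coprime_moduli]] assms by auto

lemma mem_power_orbit_iff:
  fixes y z :: "'b::comm_monoid_mult"
  assumes y: "y \<in> unity_roots (l1 * l2)" and z: "z \<in> unity_roots (l1 * l2)"
  shows "y \<in> power_orbit Q z \<longleftrightarrow>
         y ^ l2 \<in> power_orbit Q (z ^ l2) \<and> y ^ l1 \<in> power_orbit Q (z ^ l1)"
proof
  assume "y \<in> power_orbit Q z"
  then show "y ^ l2 \<in> power_orbit Q (z ^ l2) \<and> y ^ l1 \<in> power_orbit Q (z ^ l1)"
    by (auto simp flip: image_power_power_orbit)
next
  assume "y ^ l2 \<in> power_orbit Q (z ^ l2) \<and> y ^ l1 \<in> power_orbit Q (z ^ l1)"
  then obtain i j where i: "y ^ l2 = (z ^ l2) ^ (Q ^ i)" and j: "y ^ l1 = (z ^ l1) ^ (Q ^ j)"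
    unfolding power_orbit_def by blast
  obtain t where t: "[t = i] (mod ord l1 Q)" "[t = j] (mod ord l2 Q)"
    using binary_chinese_remainder_nat[OF coprime_ord] by blast
  define w where "w = z ^ (Q ^ t)"
  have "w ^ l2 = (z ^ l2) ^ (Q ^ t)" "w ^ l1 = (z ^ l1) ^ (Q ^ t)"
    unfolding w_def by (simp_all add: mult.commute flip: power_mult)
  moreover have "(z ^ l2) ^ (Q ^ t) = (z ^ l2) ^ (Q ^ i)" "(z ^ l1) ^ (Q ^ t) = (z ^ l1) ^ (Q ^ j)"
    using power_mem_unity_roots[OF z] coprime_base1 coprime_base2 t
    by (auto simp: unity_roots_def intro: power_power_eq_if_cong_ord)
  moreover have "w ^ (l1 * l2) = (z ^ (l1 * l2)) ^ (Q ^ t)"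
    unfolding w_def by (simp add: mult.commute flip: power_mult)
  then have "w \<in> unity_roots (l1 * l2)"
    using z by (simp add: unity_roots_def)
  moreover note i j
  ultimately have "(w ^ l2, w ^ l1) = (y ^ l2, y ^ l1)" "w \<in> unity_roots (l1 * l2)"
    by simp_all
  then have "w = y"
    using inj_onD[OF bij_betw_imp_inj_on[OF bij_betw_unity_roots_mult[OF coprime_moduli]] _ _ y]
    by blast
  then show "y \<in> power_orbit Q z"
    unfolding w_def power_orbit_def by blast
qed

lemma card_power_orbits_mult:
  "card (power_orbit Q ` unity_roots (l1 * l2) :: 'b::comm_monoid_mult set set) =
   card (power_orbit Q ` unity_roots l1 :: 'b set set) * card (power_orbit Q ` unity_roots l2 :: 'b set set)"
proof -
  define G where "G A = ((\<lambda>y. y ^ l2) ` A, (\<lambda>y. y ^ l1) ` A)" for A :: "'b set"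
  have G: "G (power_orbit Q z) = (power_orbit Q (z ^ l2), power_orbit Q (z ^ l1))" for z
    unfolding G_def image_power_power_orbit ..
  have "bij_betw G (power_orbit Q ` unity_roots (l1 * l2))
          (power_orbit Q ` unity_roots l1 \<times> power_orbit Q ` unity_roots l2)"
  proof (rule bij_betw_imageI)
    show "inj_on G (power_orbit Q ` unity_roots (l1 * l2))"
    proof (rule inj_onI, clarify)
      fix y z :: 'b
      assume y: "y \<in> unity_roots (l1 * l2)" and z: "z \<in> unity_roots (l1 * l2)"
        and "G (power_orbit Q y) = G (power_orbit Q z)"
      then have "y ^ l2 \<in> power_orbit Q (z ^ l2) \<and> y ^ l1 \<in> power_orbit Q (z ^ l1)"
        unfolding G using self_mem_power_orbit by (metis prod.inject)
      then have "y \<in> power_orbit Q z"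
        using mem_power_orbit_iff[OF y z] by blast
      moreover have "coprime (l1 * l2) Q"
        using coprime_base1 coprime_base2 by simp
      ultimately show "power_orbit Q y = power_orbit Q z"
        using z power_orbit_eq_if_mem unfolding unity_roots_def by blast
    qed
    have "G ` power_orbit Q ` unity_roots (l1 * l2) =
          map_prod (power_orbit Q) (power_orbit Q) ` (\<lambda>z. (z ^ l2, z ^ l1)) ` unity_roots (l1 * l2)"
      by (simp add: image_image G)
    also have "\<dots> = map_prod (power_orbit Q) (power_orbit Q) ` (unity_roots l1 \<times> unity_roots l2)"
      using bij_betw_imp_surj_on[OF bij_betw_unity_roots_mult[where 'b = 'b, OF coprime_moduli]]
      by simp
    finally show "G ` power_orbit Q ` unity_roots (l1 * l2) =
                  power_orbit Q ` unity_roots l1 \<times> power_orbit Q ` unity_roots l2"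
      by (simp add: map_prod_surj_on)
  qed
  then show ?thesis
    by (simp add: bij_betw_same_card card_cartesian_product)
qed

lemma inverse_power_mem_power_orbit:
  fixes z :: "'b::field"
  assumes "\<forall>b \<in> unity_roots l1 :: 'b set. inverse b ^ q \<in> power_orbit Q b"
    and "\<forall>c \<in> unity_roots l2 :: 'b set. inverse c ^ q \<in> power_orbit Q c"
    and z: "z \<in> unity_roots (l1 * l2)"
  shows "inverse z ^ q \<in> power_orbit Q z"
proof -
  have pow: "(inverse z ^ q) ^ a = inverse (z ^ a) ^ q" for a
    by (simp add: power_inverse mult.commute flip: power_mult)
  have "inverse z ^ q \<in> unity_roots (l1 * l2)"
    using z pow[of "l1 * l2"] by (simp add: unity_roots_def)
  moreover have "inverse (z ^ l2) ^ q \<in> power_orbit Q (z ^ l2)"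
    using assms(1) power_mem_unity_roots(1)[OF z] by blast
  moreover have "inverse (z ^ l1) ^ q \<in> power_orbit Q (z ^ l1)"
    using assms(2) power_mem_unity_roots(2)[OF z] by blast
  ultimately show ?thesis
    using mem_power_orbit_iff[OF _ z, of "inverse z ^ q"] by (simp add: pow)
qed

end

section \<open>Finite fields and the Frobenius map\<close>

lemma finite_field_power_card:
  fixes x :: "'a::{field,finite}"
  shows "x ^ CARD('a) = x"
proof (cases "x = 0")
  case True
  then show ?thesis by (simp add: finite_UNIV_card_ge_0)
next
  case False
  let ?R = "ring_of_type_algebra :: 'a ring"
  interpret field ?R by (rule field_from_type_algebra)
  have pow: "x [^]\<^bsub>?R\<^esub> n = x ^ n" for n
    by (induction n) (simp_all add: ring_of_type_algebra_def)
  have "Units ?R = UNIV - {0}"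
    using field_Units by (simp add: ring_of_type_algebra_def)
  then have "x ^ (CARD('a) - 1) = 1"
    using units_power_order_eq_one[of x] False pow
    by (simp add: card_Diff_singleton ring_of_type_algebra_def)
  then show ?thesis
    using finite_UNIV_card_ge_0[where 'a='a] by (cases "CARD('a)") auto
qed

lemma finite_field_power_card_power:
  fixes x :: "'a::{field,finite}"
  shows "x ^ (CARD('a) ^ j) = x"
  by (induction j) (simp_all add: power_mult finite_field_power_card)

lemma prime_CHAR_finite_field: "prime CHAR('a::{field,finite})"
  by (rule prime_CHAR_semidom) (simp add: finite_imp_CHAR_pos)

lemma CHAR_eq_if_card_eq_prime_power:
  assumes "CARD('a::{field,finite}) = p ^ n" "prime p"
  shows "CHAR('a) = p"
proof -
  have "CHAR('a) dvd p ^ n"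
    using CHAR_dvd_CARD[where 'a='a] assms(1) by simp
  then have "CHAR('a) dvd p"
    using prime_CHAR_finite_field prime_dvd_power by blast
  then show ?thesis
    using assms(2) prime_CHAR_finite_field primes_dvd_imp_eq by blast
qed

lemma poly_map_poly_power_CHAR:
  fixes p :: "'b::idom poly"
  assumes "prime CHAR('b)" "m = CHAR('b) ^ k"
  shows "poly (map_poly (\<lambda>c. c ^ m) p) (y ^ m) = poly p y ^ m"
proof -
  have m: "m > 0" using assms prime_gt_0_nat by auto
  have deg: "degree (map_poly (\<lambda>c. c ^ m) p) = degree p"
    by (rule degree_map_poly) (use m in auto)
  have "poly p y ^ m = (\<Sum>i\<le>degree p. (coeff p i * y ^ i) ^ m)"
    unfolding poly_altdef by (rule freshmans_dream_sum'[OF assms])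
  also have "\<dots> = (\<Sum>i\<le>degree p. coeff p i ^ m * (y ^ m) ^ i)"
    by (simp add: power_mult_distrib mult.commute flip: power_mult)
  also have "\<dots> = poly (map_poly (\<lambda>c. c ^ m) p) (y ^ m)"
    unfolding poly_altdef deg using m by (simp add: coeff_map_poly)
  finally show ?thesis ..
qed

lemma inj_power_CHAR:
  assumes "prime CHAR('b::idom)" "m = CHAR('b) ^ k"
  shows "inj (\<lambda>y::'b. y ^ m)"
proof (rule injI)
  fix y z :: 'b
  assume "y ^ m = z ^ m"
  moreover have "y ^ m = (y - z) ^ m + z ^ m"
    using freshmans_dream'[OF assms, of "y - z" z] by simp
  ultimately show "y = z"
    using assms prime_gt_0_nat by auto
qed

lemma map_poly_to_ac_add: "map_poly to_ac (p + q) = map_poly to_ac p + map_poly to_ac q"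
  by (rule poly_eqI) (simp add: coeff_map_poly)

lemma map_poly_to_ac_diff: "map_poly to_ac (p - q) = map_poly to_ac p - map_poly to_ac q"
  by (rule poly_eqI) (simp add: coeff_map_poly)

lemma map_poly_to_ac_mult: "map_poly to_ac (p * q) = map_poly to_ac p * map_poly to_ac q"
  by (rule poly_eqI) (simp add: coeff_map_poly coeff_mult to_ac_sum)

lemma map_poly_to_ac_power: "map_poly to_ac (p ^ n) = map_poly to_ac p ^ n"
  by (induction n) (simp_all add: map_poly_to_ac_mult)

lemma map_poly_to_ac_smult: "map_poly to_ac (smult c p) = smult (to_ac c) (map_poly to_ac p)"
  by (rule poly_eqI) (simp add: coeff_map_poly)

lemma map_poly_to_ac_reflect: "map_poly to_ac (reflect_poly p) = reflect_poly (map_poly to_ac p)"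
  by (rule poly_eqI) (simp add: coeff_reflect_poly coeff_map_poly degree_map_poly)

lemma to_ac_power_card_power: "to_ac (a::'a::{field,finite}) ^ (CARD('a) ^ j) = to_ac a"
  by (metis to_ac_power finite_field_power_card_power)

lemma power_card_eq_self_iff_in_range_to_ac:
  "(y::'a::{field,finite} alg_closure) ^ CARD('a) = y \<longleftrightarrow> y \<in> range to_ac"
proof
  assume y: "y ^ CARD('a) = y"
  define p :: "'a alg_closure poly" where "p = monom 1 CARD('a) + [:0, -1:]"
  have card: "CARD('a) \<ge> 2"
    using card_mono[of UNIV "{0::'a, 1}"] by simp
  then have deg: "degree p = CARD('a)"
    unfolding p_def by (subst degree_add_eq_left) (auto simp: degree_monom_eq)
  then have p: "p \<noteq> 0"
    using card by auto
  have card_roots: "card {x. poly p x = 0} \<le> CARD('a)"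
    using card_poly_roots_bound[OF p] deg by simp
  have roots: "{x. poly p x = 0} = {x. x ^ CARD('a) = x}"
    unfolding p_def by (auto simp: poly_monom)
  have "range to_ac \<subseteq> {x. poly p x = 0}"
    unfolding roots using to_ac_power_card_power[of _ 1] by auto
  moreover have "card (range (to_ac :: 'a \<Rightarrow> _)) = CARD('a)"
    by (rule card_image[OF inj_to_ac])
  ultimately have "range to_ac = {x. poly p x = 0}"
    using card_roots card_mono[OF poly_roots_finite[OF p], of "range to_ac"]
    by (intro card_subset_eq poly_roots_finite p) auto
  then show "y \<in> range to_ac"
    using y roots by auto
qed (use to_ac_power_card_power[of _ 1] in auto)

lemma poly_map_to_ac_power_card_power:
  assumes "CARD('a::{field,finite}) = CHAR('a) ^ r"
  shows "poly (map_poly to_ac (f::'a poly)) (y ^ (CARD('a) ^ j)) =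
         poly (map_poly to_ac f) y ^ (CARD('a) ^ j)"
proof -
  have "map_poly (\<lambda>c. c ^ (CARD('a) ^ j)) (map_poly to_ac f) = map_poly to_ac f"
    by (subst map_poly_map_poly) (auto simp: o_def to_ac_power_card_power)
  moreover have "CARD('a) ^ j = CHAR('a alg_closure) ^ (r * j)"
    by (simp add: assms power_mult)
  ultimately show ?thesis
    using poly_map_poly_power_CHAR[of "CARD('a) ^ j" "r * j" "map_poly to_ac f" y]
      prime_CHAR_finite_field[where 'a='a] by simp
qed

section \<open>Roots in the algebraic closure\<close>

definition ac_roots :: "'a::field poly \<Rightarrow> 'a alg_closure set" where
  "ac_roots f = {y. poly (map_poly to_ac f) y = 0}"

lemma ac_roots_mult: "ac_roots (f * g) = ac_roots f \<union> ac_roots g"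
  unfolding ac_roots_def by (auto simp: map_poly_to_ac_mult)

lemma ac_roots_mono: "f dvd g \<Longrightarrow> ac_roots f \<subseteq> ac_roots g"
  by (auto elim!: dvdE simp: ac_roots_mult)

lemma ac_roots_smult: "c \<noteq> 0 \<Longrightarrow> ac_roots (smult c f) = ac_roots f"
  unfolding ac_roots_def by (simp add: map_poly_to_ac_smult)

lemma ac_roots_X_power_minus_1: "ac_roots ([:0, 1:] ^ m - 1) = unity_roots m"
  unfolding ac_roots_def unity_roots_def
  by (simp add: map_poly_to_ac_diff map_poly_to_ac_power map_poly_pCons)

lemma finite_ac_roots: "f \<noteq> 0 \<Longrightarrow> finite (ac_roots f)"
  unfolding ac_roots_def by (intro poly_roots_finite) (simp add: map_poly_eq_0_iff)

lemma ac_roots_nonempty: "degree f > 0 \<Longrightarrow> ac_roots f \<noteq> {}"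
  unfolding ac_roots_def using alg_closed_imp_poly_has_root[of "map_poly to_ac f"]
  by (auto simp: degree_map_poly)

lemma ac_roots_mod:
  assumes "y \<in> ac_roots f" "y \<in> ac_roots g"
  shows "y \<in> ac_roots (f mod g)"
proof -
  have "map_poly to_ac f = map_poly to_ac (f div g) * map_poly to_ac g + map_poly to_ac (f mod g)"
    by (metis div_mult_mod_eq map_poly_to_ac_add map_poly_to_ac_mult)
  then show ?thesis
    using assms unfolding ac_roots_def by simp
qed

lemma ac_roots_unit: "is_unit g \<Longrightarrow> ac_roots g = {}"
  unfolding ac_roots_def by (auto simp: is_unit_poly_iff map_poly_pCons)

lemma degree_le_if_common_ac_root:
  assumes "irreducible f" "y \<in> ac_roots f"
  shows "g \<noteq> 0 \<Longrightarrow> y \<in> ac_roots g \<Longrightarrow> degree f \<le> degree g"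
proof (induction "degree g" arbitrary: g rule: less_induct)
  case less
  show ?case
  proof (rule ccontr)
    assume small: "\<not> degree f \<le> degree g"
    show False
    proof (cases "f mod g = 0")
      case True
      then have "g dvd f"
        by (simp add: mod_eq_0_iff_dvd)
      moreover have "\<not> is_unit g"
        using less.prems(2) ac_roots_unit by blast
      ultimately have "f dvd g"
        using irreducibleD'[OF assms(1)] by blast
      then show False
        using small dvd_imp_degree_le[OF _ less.prems(1)] by blast
    next
      case False
      then have "degree f \<le> degree (f mod g)"
        using less assms(2) ac_roots_mod degree_mod_less' by blast
      then show False
        using small degree_mod_less'[OF less.prems(1) False] by linarith
    qed
  qed
qed

lemma irreducible_dvd_if_common_ac_root:
  assumes "irreducible f" "y \<in> ac_roots f" "y \<in> ac_roots g"
  shows "f dvd g"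
proof (rule ccontr)
  assume "\<not> f dvd g"
  then have "g mod f \<noteq> 0"
    by (simp add: mod_eq_0_iff_dvd)
  moreover have "y \<in> ac_roots (g mod f)"
    using assms(2,3) by (rule ac_roots_mod[rotated])
  ultimately have "degree f \<le> degree (g mod f)"
    using degree_le_if_common_ac_root[OF assms(1,2)] by blast
  moreover have "f \<noteq> 0"
    using assms(1) by auto
  ultimately show False
    using degree_mod_less'[OF _ \<open>g mod f \<noteq> 0\<close>] by fastforce
qed

lemma ex_irreducible_factor_with_ac_root:
  "g \<noteq> 0 \<Longrightarrow> y \<in> ac_roots g \<Longrightarrow> \<exists>f. irreducible f \<and> f dvd g \<and> y \<in> ac_roots f"
proof (induction "degree g" arbitrary: g rule: less_induct)
  case less
  show ?case
  proof (cases "irreducible g")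
    case False
    moreover have "\<not> is_unit g"
      using less.prems ac_roots_unit by blast
    ultimately obtain a b where ab: "g = a * b" "\<not> is_unit a" "\<not> is_unit b"
      using less.prems(1) comm_semiring_1_class.irreducibleI by metis
    then have "degree a < degree g" "degree b < degree g" "a \<noteq> 0" "b \<noteq> 0"
      using less.prems(1) by (auto simp: degree_mult_eq is_unit_iff_degree)
    moreover have "y \<in> ac_roots a \<or> y \<in> ac_roots b"
      using less.prems(2) ab(1) ac_roots_mult by blast
    ultimately obtain c where "c dvd g" "degree c < degree g" "c \<noteq> 0" "y \<in> ac_roots c"
      using ab(1) by (meson dvd_triv_left dvd_triv_right)
    then show ?thesis
      using less.hyps by (blast intro: dvd_trans)
  qed (use less.prems in auto)
qed

lemma ex_monic_irreducible_factor_with_ac_root: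
  assumes "g \<noteq> 0" "y \<in> ac_roots g"
  shows "\<exists>f. lead_coeff f = 1 \<and> irreducible f \<and> f dvd g \<and> y \<in> ac_roots f"
proof -
  obtain f where f: "irreducible f" "f dvd g" "y \<in> ac_roots f"
    using ex_irreducible_factor_with_ac_root[OF assms] by blast
  define c where "c = inverse (lead_coeff f)"
  have "c \<noteq> 0"
    using f(1) by (auto simp: c_def)
  then have "is_unit [:c:]"
    by (simp add: is_unit_const_poly_iff dvd_field_iff)
  then have "irreducible (smult c f)" "smult c f dvd g"
    using f(1,2) irreducible_mult_unit_left[of "[:c:]" f] by (auto simp: smult_dvd_iff)
  moreover have "lead_coeff (smult c f) = 1"
    using f(1) by (auto simp: c_def)
  ultimately show ?thesis
    using f(3) ac_roots_smult[OF \<open>c \<noteq> 0\<close>] by metis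
qed

lemma map_poly_power_CHAR_prod_linear_factors:
  fixes A :: "'b::idom set"
  assumes "prime CHAR('b)" "m = CHAR('b) ^ k" "finite A" "(\<lambda>y. y ^ m) ` A \<subseteq> A"
  shows "map_poly (\<lambda>c. c ^ m) (\<Prod>w\<in>A. [:-w, 1:]) = (\<Prod>w\<in>A. [:-w, 1:])"
    (is "?h' = ?h")
proof -
  have A: "(\<lambda>y. y ^ m) ` A = A"
    using inj_power_CHAR[OF assms(1,2)] assms(3,4) by (intro endo_inj_surj) (auto intro: inj_on_subset)
  have m: "m > 0"
    using assms(1,2) prime_gt_0_nat by simp
  have h_roots: "poly ?h y = 0 \<longleftrightarrow> y \<in> A" for y
    using assms(3) by (simp add: poly_prod prod_zero_iff)
  have h_deg: "degree ?h = card A"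
    by (simp add: degree_prod_sum_eq)
  then have h'_deg: "degree ?h' = card A"
    using m by (subst degree_map_poly) auto
  have "poly ?h' y = 0" if "y \<in> A" for y
  proof -
    obtain w where "w \<in> A" "y = w ^ m"
      using A \<open>y \<in> A\<close> by blast
    then show ?thesis
      using poly_map_poly_power_CHAR[OF assms(1,2), of ?h w] h_roots m by simp
  qed
  moreover have "lead_coeff ?h = 1"
    by (simp add: lead_coeff_prod)
  then have "coeff ?h' (card A) = coeff ?h (card A)"
    using m h_deg by (simp add: coeff_map_poly)
  ultimately show "?h' = ?h"
    using h_deg h'_deg h_roots by (intro poly_eqI_degree_lead_coeff[where n = "card A" and A = A]) auto
qed

lemma ex_monic_poly_with_ac_roots:
  fixes A :: "'a::{field,finite} alg_closure set"
  assumes "CARD('a) = CHAR('a) ^ r" "finite A" "(\<lambda>y. y ^ CARD('a)) ` A \<subseteq> A"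
  shows "\<exists>g :: 'a poly. lead_coeff g = 1 \<and> ac_roots g = A"
proof -
  define h :: "'a alg_closure poly" where "h = (\<Prod>w\<in>A. [:-w, 1:])"
  have "map_poly (\<lambda>c. c ^ CARD('a)) h = h"
    unfolding h_def using assms prime_CHAR_finite_field[where 'a = 'a]
    by (intro map_poly_power_CHAR_prod_linear_factors[where k = r]) simp_all
  then have "coeff h i ^ CARD('a) = coeff h i" for i
    by (metis coeff_map_poly zero_power finite_UNIV_card_ge_0 finite_class.finite_UNIV)
  then have coeffs: "coeff h i \<in> range to_ac" for i
    using power_card_eq_self_iff_in_range_to_ac by blast
  define g where "g = map_poly of_ac h"
  have g: "map_poly to_ac g = h"
    unfolding g_def by (rule poly_eqI) (simp add: coeff_map_poly to_ac_of_ac[OF coeffs])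
  moreover have "lead_coeff h = 1"
    unfolding h_def by (simp add: lead_coeff_prod)
  ultimately have "lead_coeff g = 1"
    by (simp flip: g add: coeff_map_poly degree_map_poly)
  moreover have "ac_roots g = A"
    using g assms(2) unfolding ac_roots_def h_def by (simp add: poly_prod prod_zero_iff)
  ultimately show ?thesis
    by blast
qed

section \<open>Irreducible factors of x^m - 1 and Frobenius orbits\<close>

definition monic_irreducible_factors :: "nat \<Rightarrow> 'a::field poly set" where
  "monic_irreducible_factors m = {f. lead_coeff f = 1 \<and> irreducible f \<and> f dvd [:0, 1:] ^ m - 1}"

lemma irreducible_degree_pos:
  assumes "irreducible (f :: 'a::field poly)"
  shows "degree f > 0"
proof -
  have "f \<noteq> 0" "\<not> is_unit f"
    using assms by (auto simp: irreducible_not_unit)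
  then show ?thesis
    using is_unit_iff_degree[of f] by auto
qed

lemma X_power_minus_1_nonzero: "m > 0 \<Longrightarrow> ([:0, 1:] ^ m - 1 :: 'a::field poly) \<noteq> 0"
proof
  assume "m > 0" "([:0, 1:] ^ m - 1 :: 'a poly) = 0"
  then have "poly ([:0, 1:] ^ m - 1 :: 'a poly) 0 = 0"
    by simp
  then show False
    using \<open>m > 0\<close> by (simp add: zero_power)
qed

lemma ac_roots_irreducible_eq_power_orbit:
  assumes "CARD('a::{field,finite}) = CHAR('a) ^ r" "irreducible (f::'a poly)" "z \<in> ac_roots f"
  shows "ac_roots f = power_orbit CARD('a) z"
proof
  show orbit: "power_orbit CARD('a) z \<subseteq> ac_roots f"
    using assms(3) poly_map_to_ac_power_card_power[OF assms(1)]
    unfolding power_orbit_def ac_roots_def by auto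
  have "f \<noteq> 0"
    using assms(2) by auto
  then have "finite (power_orbit CARD('a) z)"
    using finite_ac_roots finite_subset[OF orbit] by blast
  moreover have "(\<lambda>y. y ^ CARD('a)) ` power_orbit CARD('a) z \<subseteq> power_orbit CARD('a) z"
    using power_mem_power_orbit[where j = 1] by auto
  ultimately obtain g :: "'a poly" where g: "ac_roots g = power_orbit CARD('a) z"
    using ex_monic_poly_with_ac_roots[OF assms(1)] by blast
  then have "z \<in> ac_roots g"
    using self_mem_power_orbit by blast
  then have "f dvd g"
    by (rule irreducible_dvd_if_common_ac_root[OF assms(2,3)])
  then show "ac_roots f \<subseteq> power_orbit CARD('a) z"
    using ac_roots_mono g by blast
qed

lemma monic_eq_if_dvd_degree_le:
  fixes f g :: "'a::field poly"
  assumes "lead_coeff f = 1" "lead_coeff g = 1" "f dvd g" "degree g \<le> degree f"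
  shows "f = g"
proof -
  obtain h where h: "g = f * h"
    using assms(3) by blast
  have "f \<noteq> 0" "h \<noteq> 0"
    using assms(2) h by auto
  then have "degree h = 0"
    using assms(4) h by (simp add: degree_mult_eq)
  moreover have "lead_coeff h = 1"
    using assms(1,2) h by (simp add: lead_coeff_mult)
  ultimately have "h = 1"
    by (metis degree_0_id one_pCons)
  then show ?thesis
    using h by simp
qed

lemma ac_roots_subset_unity_roots:
  "f \<in> monic_irreducible_factors m \<Longrightarrow> ac_roots f \<subseteq> unity_roots m"
  unfolding monic_irreducible_factors_def using ac_roots_mono ac_roots_X_power_minus_1 by blast

lemma ex_monic_irreducible_factor_with_unity_root:
  assumes "m > 0" "z \<in> unity_roots m"
  shows "\<exists>f \<in> monic_irreducible_factors m. z \<in> ac_roots f"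
  using ex_monic_irreducible_factor_with_ac_root[OF X_power_minus_1_nonzero[OF assms(1)]] assms(2)
  unfolding monic_irreducible_factors_def ac_roots_X_power_minus_1 by blast

lemma inj_on_ac_roots_monic_irreducible_factors:
  "inj_on ac_roots (monic_irreducible_factors m :: 'a::field poly set)"
proof
  fix f g :: "'a poly"
  assume f: "f \<in> monic_irreducible_factors m" and g: "g \<in> monic_irreducible_factors m"
    and eq: "ac_roots f = ac_roots g"
  obtain z where "z \<in> ac_roots f"
    using f ac_roots_nonempty[OF irreducible_degree_pos] unfolding monic_irreducible_factors_def by blast
  then have "f dvd g" "g dvd f"
    using f g eq irreducible_dvd_if_common_ac_root
    unfolding monic_irreducible_factors_def by auto
  moreover have "f \<noteq> 0"
    using f unfolding monic_irreducible_factors_def by auto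
  ultimately show "f = g"
    using f g monic_eq_if_dvd_degree_le dvd_imp_degree_le
    unfolding monic_irreducible_factors_def by blast
qed

lemma ac_roots_image_monic_irreducible_factors:
  assumes "CARD('a::{field,finite}) = CHAR('a) ^ r" "m > 0"
  shows "ac_roots ` (monic_irreducible_factors m :: 'a poly set) = power_orbit CARD('a) ` unity_roots m"
proof (intro equalityI subsetI)
  fix A :: "'a alg_closure set"
  assume "A \<in> ac_roots ` (monic_irreducible_factors m :: 'a poly set)"
  then obtain f :: "'a poly" where f: "f \<in> monic_irreducible_factors m" "A = ac_roots f"
    by blast
  moreover obtain z where "z \<in> ac_roots f"
    using f ac_roots_nonempty[OF irreducible_degree_pos] unfolding monic_irreducible_factors_def by blast
  ultimately show "A \<in> power_orbit CARD('a) ` unity_roots m"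
    using ac_roots_subset_unity_roots ac_roots_irreducible_eq_power_orbit[OF assms(1)]
    unfolding monic_irreducible_factors_def by blast
next
  fix A :: "'a alg_closure set"
  assume "A \<in> power_orbit CARD('a) ` unity_roots m"
  then obtain z where z: "z \<in> unity_roots m" "A = power_orbit CARD('a) z"
    by blast
  then obtain f :: "'a poly" where f: "f \<in> monic_irreducible_factors m" "z \<in> ac_roots f"
    using ex_monic_irreducible_factor_with_unity_root[OF assms(2)] by blast
  then have "ac_roots f = A"
    using z(2) ac_roots_irreducible_eq_power_orbit[OF assms(1)]
    unfolding monic_irreducible_factors_def by blast
  then show "A \<in> ac_roots ` (monic_irreducible_factors m :: 'a poly set)"
    using f(1) by blast
qed

lemma card_monic_irreducible_factors:
  assumes "CARD('a::{field,finite}) = CHAR('a) ^ r" "m > 0"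
  shows "card (monic_irreducible_factors m :: 'a poly set) =
         card (power_orbit CARD('a) ` unity_roots m :: 'a alg_closure set set)"
  using bij_betw_same_card[OF bij_betw_imageI[OF inj_on_ac_roots_monic_irreducible_factors
        ac_roots_image_monic_irreducible_factors[OF assms]]] .

section \<open>Self-conjugate-reciprocal factors\<close>

lemma coeff_0_nonzero_if_dvd_X_power_minus_1:
  fixes f :: "'a::field poly"
  assumes "f dvd [:0, 1:] ^ m - 1" "m > 0"
  shows "coeff f 0 \<noteq> 0"
proof
  assume "coeff f 0 = 0"
  moreover obtain g where "[:0, 1:] ^ m - 1 = f * g"
    using assms(1) by blast
  then have "poly ([:0, 1:] ^ m - 1) 0 = poly f 0 * poly g 0"
    by simp
  ultimately show False
    using assms(2) by (simp add: poly_0_coeff_0 coeff_0_power zero_power)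
qed

lemma inverse_power_mem_ac_roots_dagger_poly:
  fixes f :: "'a::{field,finite} poly"
  assumes "q = CHAR('a) ^ k" "coeff f 0 \<noteq> 0" "y \<in> ac_roots f"
  shows "inverse y ^ q \<in> ac_roots (dagger_poly q f)"
proof -
  have "y \<noteq> 0"
    using assms(2,3) unfolding ac_roots_def by (auto simp: poly_0_coeff_0 coeff_map_poly)
  then have "poly (map_poly to_ac (recip_poly f)) (inverse y) = 0"
    using assms(3) unfolding ac_roots_def recip_poly_def
    by (simp add: map_poly_to_ac_smult map_poly_to_ac_reflect poly_reflect_poly_nz)
  moreover have "q > 0"
    using assms(1) prime_CHAR_finite_field prime_gt_0_nat by auto
  then have "map_poly to_ac (dagger_poly q f) = map_poly (\<lambda>c. c ^ q) (map_poly to_ac (recip_poly f))"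
    unfolding dagger_poly_def conj_poly_def by (rule_tac poly_eqI) (simp add: coeff_map_poly)
  ultimately show ?thesis
    using poly_map_poly_power_CHAR[of q k "map_poly to_ac (recip_poly f)" "inverse y"] assms(1)
      prime_CHAR_finite_field[where 'a='a] \<open>q > 0\<close>
    unfolding ac_roots_def by simp
qed

lemma
  fixes f :: "'a::field poly"
  assumes "coeff f 0 \<noteq> 0" "q > 0"
  shows lead_coeff_dagger_poly: "lead_coeff (dagger_poly q f) = 1"
    and degree_dagger_poly: "degree (dagger_poly q f) = degree f"
proof -
  have "degree (recip_poly f) = degree f" "lead_coeff (recip_poly f) = 1"
    using assms(1) by (simp_all add: recip_poly_def coeff_reflect_poly)
  moreover have "degree (dagger_poly q f) = degree (recip_poly f)"
    unfolding dagger_poly_def conj_poly_def by (rule degree_map_poly) (use assms(2) in simp)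
  ultimately show "lead_coeff (dagger_poly q f) = 1" "degree (dagger_poly q f) = degree f"
    using assms(2) by (simp_all add: dagger_poly_def conj_poly_def coeff_map_poly)
qed

lemma dagger_poly_eq_iff_inverse_power_mem_ac_roots:
  fixes f :: "'a::{field,finite} poly"
  assumes "CARD('a) = q ^ 2" "q = CHAR('a) ^ k"
    and "lead_coeff f = 1" "irreducible f" "coeff f 0 \<noteq> 0" "z \<in> ac_roots f"
  shows "dagger_poly q f = f \<longleftrightarrow> inverse z ^ q \<in> ac_roots f"
proof
  assume "dagger_poly q f = f"
  then show "inverse z ^ q \<in> ac_roots f"
    using inverse_power_mem_ac_roots_dagger_poly[OF assms(2,5,6)] by simp
next
  assume "inverse z ^ q \<in> ac_roots f"
  then have "inverse (inverse z ^ q) ^ q \<in> ac_roots (dagger_poly q f)"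
    by (rule inverse_power_mem_ac_roots_dagger_poly[OF assms(2,5)])
  moreover have "inverse (inverse z ^ q) ^ q = z ^ CARD('a)"
    by (simp add: assms(1) power_inverse power2_eq_square flip: power_mult)
  moreover have CARD: "CARD('a) = CHAR('a) ^ (k * 2)"
    using assms(1,2) by (simp add: power_mult)
  then have "z ^ CARD('a) \<in> ac_roots f"
    using ac_roots_irreducible_eq_power_orbit[OF CARD assms(4,6)]
      power_mem_power_orbit[OF self_mem_power_orbit, where j = 1] by simp
  ultimately have "f dvd dagger_poly q f"
    using irreducible_dvd_if_common_ac_root[OF assms(4)] by metis
  moreover have "q > 0"
    using assms(2) prime_CHAR_finite_field prime_gt_0_nat by auto
  ultimately show "dagger_poly q f = f"
    using monic_eq_if_dvd_degree_le[OF assms(3)] lead_coeff_dagger_poly degree_dagger_poly assms(5)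
    by (metis order_refl)
qed

lemma SCRIM_iff_inverse_power_mem_power_orbit:
  fixes q m :: nat
  assumes "CARD('a::{field,finite}) = q ^ 2" "q = CHAR('a) ^ k" "m > 0"
    and f: "f \<in> monic_irreducible_factors m" and z: "z \<in> ac_roots (f :: 'a poly)"
  shows "SCRIM q f \<longleftrightarrow> inverse z ^ q \<in> power_orbit CARD('a) z"
proof -
  have CARD: "CARD('a) = CHAR('a) ^ (k * 2)"
    using assms(1,2) by (simp add: power_mult)
  have f: "lead_coeff f = 1" "irreducible f" "coeff f 0 \<noteq> 0"
    using f coeff_0_nonzero_if_dvd_X_power_minus_1 assms(3)
    unfolding monic_irreducible_factors_def by auto
  then have "SCRIM q f \<longleftrightarrow> dagger_poly q f = f"
    unfolding SCRIM_def by auto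
  also have "\<dots> \<longleftrightarrow> inverse z ^ q \<in> ac_roots f"
    by (rule dagger_poly_eq_iff_inverse_power_mem_ac_roots[OF assms(1,2) f z])
  also have "ac_roots f = power_orbit CARD('a) z"
    by (rule ac_roots_irreducible_eq_power_orbit[OF CARD f(2) z])
  finally show ?thesis .
qed

lemma all_monic_irreducible_factors_SCRIM_iff:
  fixes q m :: nat
  assumes "CARD('a::{field,finite}) = q ^ 2" "q = CHAR('a) ^ k" "m > 0"
  shows "(\<forall>f \<in> monic_irreducible_factors m :: 'a poly set. SCRIM q f) \<longleftrightarrow>
         (\<forall>z \<in> unity_roots m :: 'a alg_closure set. inverse z ^ q \<in> power_orbit CARD('a) z)"
proof
  assume all: "\<forall>f \<in> monic_irreducible_factors m :: 'a poly set. SCRIM q f"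
  show "\<forall>z \<in> unity_roots m :: 'a alg_closure set. inverse z ^ q \<in> power_orbit CARD('a) z"
  proof
    fix z :: "'a alg_closure"
    assume "z \<in> unity_roots m"
    then obtain f :: "'a poly" where "f \<in> monic_irreducible_factors m" "z \<in> ac_roots f"
      using ex_monic_irreducible_factor_with_unity_root[OF assms(3)] by blast
    then show "inverse z ^ q \<in> power_orbit CARD('a) z"
      using all SCRIM_iff_inverse_power_mem_power_orbit[OF assms] by blast
  qed
next
  assume all: "\<forall>z \<in> unity_roots m :: 'a alg_closure set. inverse z ^ q \<in> power_orbit CARD('a) z"
  show "\<forall>f \<in> monic_irreducible_factors m :: 'a poly set. SCRIM q f"
  proof
    fix f :: "'a poly"
    assume f: "f \<in> monic_irreducible_factors m"
    then obtain z where "z \<in> ac_roots f"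
      using ac_roots_nonempty[OF irreducible_degree_pos] unfolding monic_irreducible_factors_def by blast
    then show "SCRIM q f"
      using all SCRIM_iff_inverse_power_mem_power_orbit[OF assms f] ac_roots_subset_unity_roots[OF f]
      by blast
  qed
qed

lemma Omega_eq_monic_irreducible_factors:
  assumes "\<forall>f \<in> monic_irreducible_factors m :: 'a::field poly set. SCRIM q f"
  shows "Omega q m = (monic_irreducible_factors m :: 'a poly set)"
  using assms unfolding Omega_def monic_irreducible_factors_def SCRIM_def by blast

theorem corollary2p13:
  fixes q l1 l2 :: nat
  assumes card_field: "card (UNIV :: 'a::{field,finite} set) = q ^ 2"
    and q_pp: "\<exists>p k. prime p \<and> k > 0 \<and> q = p ^ k"
    and l1: "prime l1" "odd l1" "coprime l1 q"
    and l2: "prime l2" "odd l2" "coprime l2 q"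
    and dist: "l1 \<noteq> l2"
    and all1: "\<forall>f :: 'a poly. lead_coeff f = 1 \<and> irreducible f \<and> f dvd ([:0, 1:] ^ l1 - 1) \<longrightarrow> SCRIM q f"
    and all2: "\<forall>f :: 'a poly. lead_coeff f = 1 \<and> irreducible f \<and> f dvd ([:0, 1:] ^ l2 - 1) \<longrightarrow> SCRIM q f"
    and ordgcd: "gcd (ord l1 (q ^ 2)) (ord l2 (q ^ 2)) = 1"
  shows "card (Omega q (l1 * l2) :: 'a poly set) =
         card (Omega q l1 :: 'a poly set) * card (Omega q l2 :: 'a poly set)"
proof -
  obtain p k where "prime p" "q = p ^ k"
    using q_pp by blast
  moreover have "CARD('a) = p ^ (k * 2)"
    using card_field \<open>q = p ^ k\<close> by (simp add: power_mult)
  ultimately have q: "q = CHAR('a) ^ k"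
    using CHAR_eq_if_card_eq_prime_power[where 'a = 'a] by simp
  have CARD: "CARD('a) = CHAR('a) ^ (k * 2)"
    using card_field q by (simp add: power_mult)
  have pos: "l1 > 0" "l2 > 0" "l1 * l2 > 0"
    using l1(1) l2(1) by (simp_all add: prime_gt_0_nat)
  have "coprime l1 l2" "coprime (ord l1 (q ^ 2)) (ord l2 (q ^ 2))"
    using primes_coprime[OF l1(1) l2(1) dist] ordgcd by (simp_all add: coprime_iff_gcd_eq_1)
  then interpret coprime_orders "q ^ 2" l1 l2
    using l1(3) l2(3) by unfold_locales simp_all
  have SCRIM_iff: "(\<forall>f \<in> monic_irreducible_factors m :: 'a poly set. SCRIM q f) \<longleftrightarrow>
      (\<forall>z \<in> unity_roots m :: 'a alg_closure set. inverse z ^ q \<in> power_orbit (q ^ 2) z)"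
    if "m > 0" for m
    using all_monic_irreducible_factors_SCRIM_iff[OF card_field q that] card_field by simp
  have factors1: "\<forall>f \<in> monic_irreducible_factors l1 :: 'a poly set. SCRIM q f"
    and factors2: "\<forall>f \<in> monic_irreducible_factors l2 :: 'a poly set. SCRIM q f"
    using all1 all2 unfolding monic_irreducible_factors_def by blast+
  then have "\<forall>f \<in> monic_irreducible_factors (l1 * l2) :: 'a poly set. SCRIM q f"
    using SCRIM_iff pos inverse_power_mem_power_orbit by blast
  moreover have card_Omega: "card (Omega q m :: 'a poly set) =
      card (power_orbit (q ^ 2) ` unity_roots m :: 'a alg_closure set set)"
    if "m > 0" "\<forall>f \<in> monic_irreducible_factors m :: 'a poly set. SCRIM q f" for m
    using Omega_eq_monic_irreducible_factors[OF that(2)] card_monic_irreducible_factors[OF CARD that(1)]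
      card_field by simp
  ultimately show ?thesis
    using card_Omega pos factors1 factors2 card_power_orbits_mult by simp
qed

end
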